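(* Let $M$ be a strongly regular sequence, $\Omega\subset\mathbb{R}^n$ open, and let $\varphi$ be a non-zero element of $\mathcal{C}_M(\Omega)$ with zero set $X$. Assume that $\varphi$ satisfies the $\mathcal{C}_M$ Łojasiewicz condition, and let $X_\infty=\{a\in X : T_a\varphi=0\}$ be the set of points of flatness of $\varphi$. Then $X\setminus X_\infty$ is dense in the boundary $\partial X$ of $X$.
   Context: Multi-index notation: $J=(j_1,\dots,j_n)$, $j=j_1+\dots+j_n$, $J!=j_1!\cdots j_n!$, $D^J=\partial^j/\partial x_1^{j_1}\cdots\partial x_n^{j_n}$. $T_a\varphi=\sum_J \frac{1}{J!}D^J\varphi(a)x^J$ is the formal Taylor series at $a$. A sequence $M=(M_j)_{j\ge0}$ of reals is strongly regular if: $M$ is increasing with $M_0=1$; $M_{j+1}/M_j$ is increasing; there is $A>0$ with $M_{j+k}\le A^{j+k}M_jM_k$ for all $j,k$; and there is $A>0$ with $\sum_{j\ge k}\frac{M_j}{(j+1)M_{j+1}}\le A\frac{M_k}{M_{k+1}}$ for all $k$. $h_M(t)=\inf_{j\ge0}t^jM_j$ for $t>0$, $h_M(0)=0$. $\mathcal{C}_M(\Omega)$ is the space of $f\in\mathcal{C}^\infty(\Omega)$ such that for every compact $K\subset\Omega$ there are $C,\sigma>0$ with $\vert D^Jf(x)\vert\le C\sigma^j j!M_j$ for all $J$, $x\in K$. A non-zero $\varphi\in\mathcal{C}_M(\Omega)$ with zero set $X$ satisfies the $\mathcal{C}_M$ Łojasiewicz condition if for every compact $K\subset\Omega$ and every real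 $\lambda>0$ there exist $C,\sigma>0$ such that for all $J\in\mathbb{N}^n$ and all $x\in K\setminus X$, $\vert D^J(1/\varphi)(x)\vert\le \dfrac{C\sigma^j j!M_j}{h_M(\lambda\,\mathrm{dist}(x,X))}$. *)

theory Defs
  imports "HOL-Analysis.Analysis"
begin

definition pdiff :: "'n::finite \<Rightarrow> (real^'n \<Rightarrow> real) \<Rightarrow> real^'n \<Rightarrow> real" where
  "pdiff i f = (\<lambda>x. frechet_derivative f (at x) (axis i 1))"

text \<open>Iterated partial derivative along a word of coordinate directions; for a smooth
  function D w f equals D^J f, where J counts the occurrences of each index in w,
  and the order j of J is the length of w.\<close>
fun Dw :: "'n::finite list \<Rightarrow> (real^'n \<Rightarrow> real) \<Rightarrow> real^'n \<Rightarrow> real" where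
  "Dw [] f = f"
| "Dw (i # w) f = pdiff i (Dw w f)"

definition smooth_on :: "(real^'n::finite) set \<Rightarrow> (real^'n \<Rightarrow> real) \<Rightarrow> bool" where
  "smooth_on \<Omega> f \<longleftrightarrow> (\<forall>w. \<forall>x\<in>\<Omega>. Dw w f differentiable (at x))"

definition strongly_regular :: "(nat \<Rightarrow> real) \<Rightarrow> bool" where
  "strongly_regular M \<longleftrightarrow>
     incseq M \<and> M 0 = 1 \<and>
     incseq (\<lambda>j. M (Suc j) / M j) \<and>
     (\<exists>A>0. \<forall>j k. M (j + k) \<le> A ^ (j + k) * M j * M k) \<and>
     (\<exists>A>0. \<forall>k N. (\<Sum>j=k..N. M j / ((real j + 1) * M (Suc j))) \<le> A * M k / M (Suc k))"

definition hM :: "(nat \<Rightarrow> real) \<Rightarrow> real \<Rightarrow> real" where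
  "hM M t = (if t = 0 then 0 else (INF j. t ^ j * M j))"

definition CM :: "(nat \<Rightarrow> real) \<Rightarrow> (real^'n::finite) set \<Rightarrow> (real^'n \<Rightarrow> real) set" where
  "CM M \<Omega> = {f. smooth_on \<Omega> f \<and>
     (\<forall>K. compact K \<and> K \<subseteq> \<Omega> \<longrightarrow>
        (\<exists>C>0. \<exists>\<sigma>>0. \<forall>w. \<forall>x\<in>K.
           \<bar>Dw w f x\<bar> \<le> C * \<sigma> ^ length w * fact (length w) * M (length w)))}"

definition zero_set :: "(real^'n::finite) set \<Rightarrow> (real^'n \<Rightarrow> real) \<Rightarrow> (real^'n) set" where
  "zero_set \<Omega> \<phi> = {x\<in>\<Omega>. \<phi> x = 0}"

definition CM_lojasiewicz :: "(nat \<Rightarrow> real) \<Rightarrow> (real^'n::finite) set \<Rightarrow> (real^'n \<Rightarrow> real) \<Rightarrow> bool" where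
  "CM_lojasiewicz M \<Omega> \<phi> \<longleftrightarrow>
     (\<forall>K. compact K \<and> K \<subseteq> \<Omega> \<longrightarrow> (\<forall>lam>0.
        (\<exists>C>0. \<exists>\<sigma>>0. \<forall>w. \<forall>x\<in>K - zero_set \<Omega> \<phi>.
           \<bar>Dw w (\<lambda>y. 1 / \<phi> y) x\<bar> \<le>
             C * \<sigma> ^ length w * fact (length w) * M (length w)
               / hM M (lam * infdist x (zero_set \<Omega> \<phi>)))))"

definition flat_points :: "(real^'n::finite) set \<Rightarrow> (real^'n \<Rightarrow> real) \<Rightarrow> (real^'n) set" where
  "flat_points \<Omega> \<phi> = {a\<in>zero_set \<Omega> \<phi>. \<forall>w. Dw w \<phi> a = 0}"

end

theory Submission
  imports Defs
begin

text \<open>Suppose a boundary point \<open>a\<close> of \<open>X\<close> had a neighbourhood in which every zero of \<open>\<phi>\<close> is flat.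
  For \<open>x \<notin> X\<close> near \<open>a\<close> put \<open>d = dist(x, X)\<close> and pick a zero \<open>p\<close> with \<open>|x - p| < 2d\<close>.
  Integrating the \<open>C\<^sub>M\<close> bounds along \<open>[p, x]\<close> from the flat point \<open>p\<close> gives
  \<open>|\<phi> x| \<le> C h\<^sub>M(\<tau> d)\<close> for a constant \<open>\<tau>\<close>, and moderate growth of \<open>M\<close> turns this into
  \<open>|\<phi> x| \<le> C h\<^sub>M(\<lambda> d)\<^sup>2\<close> with \<open>\<lambda> = A \<tau>\<close>. The Lojasiewicz condition for this \<open>\<lambda>\<close> gives
  \<open>h\<^sub>M(\<lambda> d) \<le> C' |\<phi> x|\<close>, hence \<open>h\<^sub>M(\<lambda> d) \<ge> 1/(C C')\<close>; but \<open>h\<^sub>M(\<lambda> d) \<le> \<lambda> d M\<^sub>1\<close> tends to \<open>0\<close>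
  as \<open>x\<close> tends to \<open>a\<close>.\<close>

lemma strongly_regular_ge_one:
  assumes "strongly_regular M"
  shows "1 \<le> M j"
  using assms unfolding strongly_regular_def by (metis incseq_def zero_le)

lemma hM_nonneg:
  assumes "\<And>j. 0 \<le> M j" "0 \<le> t"
  shows "0 \<le> hM M t"
  unfolding hM_def using assms by (auto intro!: cINF_greatest)

lemma hM_le:
  assumes "\<And>j. 0 \<le> M j" "0 \<le> t"
  shows "hM M t \<le> t ^ j * M j"
  unfolding hM_def using assms by (auto intro!: cINF_lower bdd_belowI2[where m=0])

lemma hM_greatest:
  assumes "0 < t" "\<And>j. c \<le> t ^ j * M j"
  shows "c \<le> hM M t"
  unfolding hM_def using assms by (auto intro!: cINF_greatest)

lemma hM_mono:
  assumes M: "\<And>j. 0 \<le> M j" and "0 \<le> s" "s \<le> t"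
  shows "hM M s \<le> hM M t"
proof (cases "s = 0")
  case True
  then show ?thesis using hM_nonneg[of M t, OF M] assms by (simp add: hM_def)
next
  case False
  then have "0 < s" using assms by simp
  show ?thesis
  proof (rule hM_greatest)
    show "0 < t" using \<open>0 < s\<close> \<open>s \<le> t\<close> by simp
    fix j
    have "hM M s \<le> s ^ j * M j" using hM_le[of M s j, OF M] \<open>0 < s\<close> by simp
    also have "\<dots> \<le> t ^ j * M j" using assms M[of j] by (simp add: mult_right_mono power_mono)
    finally show "hM M s \<le> t ^ j * M j" .
  qed
qed

text \<open>Moderate growth \<open>M\<^sub>2\<^sub>j \<le> A\<^sup>2\<^sup>j M\<^sub>j\<^sup>2\<close> controls \<open>h\<^sub>M\<close> at the even exponents.\<close>
lemma hM_div_le_power2: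
  assumes M: "\<And>j. 0 \<le> M j" and "0 < t" "0 < A"
    and growth: "\<And>j k. M (j + k) \<le> A ^ (j + k) * M j * M k"
  shows "hM M (t / A) \<le> (hM M t)\<^sup>2"
proof -
  have "sqrt (hM M (t / A)) \<le> t ^ j * M j" for j
  proof -
    have "hM M (t / A) \<le> (t / A) ^ (j + j) * M (j + j)"
      using hM_le[of M, OF M] assms by simp
    also have "\<dots> \<le> (t / A) ^ (j + j) * (A ^ (j + j) * M j * M j)"
      using growth[of j j] assms by (intro mult_left_mono) auto
    also have "\<dots> = (t ^ j * M j)\<^sup>2"
      using assms by (simp add: power_divide power_add power2_eq_square field_simps)
    finally show ?thesis
      using M[of j] assms by (simp add: real_le_lsqrt)
  qed
  then have "sqrt (hM M (t / A)) \<le> hM M t"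
    by (rule hM_greatest[OF \<open>0 < t\<close>])
  moreover have "0 \<le> hM M (t / A)"
    using hM_nonneg[of M "t / A", OF M] assms by simp
  ultimately show ?thesis
    by (metis real_sqrt_ge_zero real_sqrt_pow2 power_mono)
qed

lemma one_le_mult_hM_of_squeeze:
  assumes M: "\<And>j. 0 \<le> M j" and "0 < t" "0 < A"
    and growth: "\<And>j k. M (j + k) \<le> A ^ (j + k) * M j * M k"
    and "0 < y" and upper: "y \<le> C * hM M (t / A)" and lower: "1 / y \<le> C' / hM M t"
  shows "1 \<le> C * C' * hM M t"
proof -
  define h where "h = hM M t"
  have "0 \<le> h" using hM_nonneg[of M t, OF M] \<open>0 < t\<close> by (simp add: h_def)
  moreover have "h \<noteq> 0" using lower \<open>0 < y\<close> by (auto simp: h_def)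
  ultimately have "0 < h" by simp
  have "h \<le> C' * y"
    using lower \<open>0 < h\<close> \<open>0 < y\<close> by (simp add: h_def field_simps)
  then have "0 < C'"
    using \<open>0 < y\<close> \<open>0 < h\<close> by (auto simp: zero_less_mult_iff dest: order.strict_trans2)
  have "0 < C * hM M (t / A)" using upper \<open>0 < y\<close> by linarith
  then have "0 < C"
    using hM_nonneg[of M "t / A", OF M] assms by (auto simp: zero_less_mult_iff)
  have "y \<le> C * h\<^sup>2"
    using upper hM_div_le_power2[of M, OF M \<open>0 < t\<close> \<open>0 < A\<close> growth] \<open>0 < C\<close>
    by (metis h_def mult_left_mono order.trans less_imp_le)
  then have "h \<le> C' * (C * h\<^sup>2)"
    using \<open>h \<le> C' * y\<close> \<open>0 < C'\<close> by (meson mult_left_mono order.trans less_imp_le)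
  then show ?thesis
    using \<open>0 < h\<close> by (simp add: h_def power2_eq_square field_simps)
qed

lemma abs_le_power_fact_of_deriv_bound:
  fixes g g' :: "real \<Rightarrow> real"
  assumes "0 \<le> t" and "g 0 = 0"
    and deriv: "\<And>s. 0 \<le> s \<Longrightarrow> s \<le> t \<Longrightarrow> (g has_real_derivative g' s) (at s)"
    and bound: "\<And>s. 0 \<le> s \<Longrightarrow> s \<le> t \<Longrightarrow> \<bar>g' s\<bar> \<le> c * s ^ j / fact j"
  shows "\<bar>g t\<bar> \<le> c * t ^ Suc j / fact (Suc j)"
proof -
  define G where "G s = c * s ^ Suc j / fact (Suc j)" for s
  have G: "(G has_real_derivative c * s ^ j / fact j) (at s)" for s
    unfolding G_def by (rule derivative_eq_intros refl | simp)+
  have "(\<lambda>s. G s - g s) 0 \<le> (\<lambda>s. G s - g s) t"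
    using DERIV_diff[OF G deriv] bound
    by (intro DERIV_nonneg_imp_nondecreasing[OF \<open>0 \<le> t\<close>]) (force simp: abs_le_iff)
  moreover have "(\<lambda>s. G s + g s) 0 \<le> (\<lambda>s. G s + g s) t"
    using DERIV_add[OF G deriv] bound
    by (intro DERIV_nonneg_imp_nondecreasing[OF \<open>0 \<le> t\<close>]) (force simp: abs_le_iff)
  ultimately show ?thesis
    using \<open>g 0 = 0\<close> by (auto simp: G_def)
qed

lemma frechet_derivative_eq_sum_pdiff:
  fixes f :: "real^'n::finite \<Rightarrow> real"
  assumes "f differentiable (at x)"
  shows "frechet_derivative f (at x) v = (\<Sum>i\<in>UNIV. v$i * pdiff i f x)"
proof -
  let ?L = "frechet_derivative f (at x)"
  have "linear ?L"
    using assms frechet_derivative_works has_derivative_linear by blast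
  have "?L v = ?L (\<Sum>i\<in>UNIV. v$i *\<^sub>R axis i 1)"
    using basis_expansion[of v] by (simp add: scalar_mult_eq_scaleR)
  also have "\<dots> = (\<Sum>i\<in>UNIV. v$i * ?L (axis i 1))"
    using \<open>linear ?L\<close> by (simp add: linear_sum linear_scale)
  finally show ?thesis by (simp add: pdiff_def)
qed

lemma has_real_derivative_along_line:
  fixes f :: "real^'n::finite \<Rightarrow> real"
  assumes "f differentiable (at (p + s *\<^sub>R v))"
  shows "((\<lambda>s. f (p + s *\<^sub>R v)) has_real_derivative frechet_derivative f (at (p + s *\<^sub>R v)) v) (at s)"
proof -
  let ?L = "frechet_derivative f (at (p + s *\<^sub>R v))"
  have f: "(f has_derivative ?L) (at (p + s *\<^sub>R v))"
    using assms frechet_derivative_works by blast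
  have "((\<lambda>s. p + s *\<^sub>R v) has_derivative (\<lambda>h. h *\<^sub>R v)) (at s)"
    by (auto intro!: derivative_eq_intros)
  then have "((f \<circ> (\<lambda>s. p + s *\<^sub>R v)) has_derivative (?L \<circ> (\<lambda>h. h *\<^sub>R v))) (at s)"
    using f by (intro diff_chain_at) simp_all
  moreover have "?L \<circ> (\<lambda>h. h *\<^sub>R v) = (*) (?L v)"
    using has_derivative_linear[OF f] by (auto simp: linear_scale fun_eq_iff)
  ultimately show ?thesis
    by (simp add: has_field_derivative_def o_def)
qed

lemma line_point_in_closed_segment:
  assumes "0 \<le> t" "t \<le> 1"
  shows "p + t *\<^sub>R (y - p) \<in> closed_segment p y"
  unfolding closed_segment_def using assms
  by (auto intro!: exI[of _ t] simp: algebra_simps)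

text \<open>Integrate \<open>j\<close> times along \<open>[p, y]\<close>, starting from the flat point \<open>p\<close>.\<close>
lemma flat_Dw_bound_along_segment:
  fixes \<phi> :: "real^'n::finite \<Rightarrow> real"
  assumes smooth: "\<And>w z. z \<in> closed_segment p y \<Longrightarrow> Dw w \<phi> differentiable (at z)"
    and flat: "\<And>w. Dw w \<phi> p = 0"
    and bound: "\<And>w z. z \<in> closed_segment p y \<Longrightarrow> \<bar>Dw w \<phi> z\<bar> \<le> B (length w)"
    and "0 \<le> t" "t \<le> 1"
  shows "\<bar>Dw w \<phi> (p + t *\<^sub>R (y - p))\<bar>
           \<le> B (length w + j) * (real CARD('n) * norm (y - p)) ^ j * t ^ j / fact j"
  using \<open>0 \<le> t\<close> \<open>t \<le> 1\<close>
proof (induction j arbitrary: w t)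
  case 0
  then show ?case by (simp add: bound line_point_in_closed_segment)
next
  case (Suc j)
  let ?D = "norm (y - p)" and ?N = "real CARD('n)"
  let ?c = "B (length w + Suc j) * (?N * ?D) ^ Suc j"
  define g where "g s = Dw w \<phi> (p + s *\<^sub>R (y - p))" for s
  define g' where "g' s = frechet_derivative (Dw w \<phi>) (at (p + s *\<^sub>R (y - p))) (y - p)" for s
  have "\<bar>g t\<bar> \<le> ?c * t ^ Suc j / fact (Suc j)"
  proof (rule abs_le_power_fact_of_deriv_bound)
    show "0 \<le> t" "g 0 = 0" using Suc.prems flat by (simp_all add: g_def)
  next
    fix s :: real assume s: "0 \<le> s" "s \<le> t"
    then have "s \<le> 1" using Suc.prems by simp
    then have diff: "Dw w \<phi> differentiable (at (p + s *\<^sub>R (y - p)))"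
      using smooth line_point_in_closed_segment s by blast
    show "(g has_real_derivative g' s) (at s)"
      unfolding g_def g'_def by (rule has_real_derivative_along_line[OF diff])
    have "\<bar>g' s\<bar> = \<bar>\<Sum>i\<in>UNIV. (y - p)$i * Dw (i # w) \<phi> (p + s *\<^sub>R (y - p))\<bar>"
      unfolding g'_def frechet_derivative_eq_sum_pdiff[OF diff] by simp
    also have "\<dots> \<le> (\<Sum>i\<in>UNIV. \<bar>(y - p)$i\<bar> * \<bar>Dw (i # w) \<phi> (p + s *\<^sub>R (y - p))\<bar>)"
      unfolding abs_mult[symmetric] by (rule sum_abs)
    also have "\<dots> \<le> (\<Sum>i\<in>(UNIV::'n set). ?D * (B (length w + Suc j) * (?N * ?D) ^ j * s ^ j / fact j))"
    proof (rule sum_mono)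
      fix i
      have "\<bar>Dw (i # w) \<phi> (p + s *\<^sub>R (y - p))\<bar> \<le> B (length w + Suc j) * (?N * ?D) ^ j * s ^ j / fact j"
        using Suc.IH[of s "i # w"] s \<open>s \<le> 1\<close> by simp
      then show "\<bar>(y - p)$i\<bar> * \<bar>Dw (i # w) \<phi> (p + s *\<^sub>R (y - p))\<bar>
                   \<le> ?D * (B (length w + Suc j) * (?N * ?D) ^ j * s ^ j / fact j)"
        by (rule mult_mono[OF component_le_norm_cart]) auto
    qed
    also have "\<dots> = ?c * s ^ j / fact j"
      by (simp add: algebra_simps)
    finally show "\<bar>g' s\<bar> \<le> ?c * s ^ j / fact j" .
  qed
  then show ?case by (simp add: g_def)
qed

lemma flat_abs_le_hM:
  fixes \<phi> :: "real^'n::finite \<Rightarrow> real"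
  assumes smooth: "\<And>w z. z \<in> closed_segment p x \<Longrightarrow> Dw w \<phi> differentiable (at z)"
    and flat: "\<And>w. Dw w \<phi> p = 0"
    and bound: "\<And>w z. z \<in> closed_segment p x \<Longrightarrow>
                  \<bar>Dw w \<phi> z\<bar> \<le> C * \<sigma> ^ length w * fact (length w) * M (length w)"
    and "0 < C" "0 < \<sigma>"
  shows "\<bar>\<phi> x\<bar> \<le> C * hM M (real CARD('n) * \<sigma> * norm (x - p))"
proof (cases "x = p")
  case True
  then show ?thesis using flat[of "[]"] by (simp add: hM_def)
next
  case False
  let ?t = "real CARD('n) * \<sigma> * norm (x - p)"
  have "\<bar>\<phi> x\<bar> / C \<le> hM M ?t"
  proof (rule hM_greatest)
    show "0 < ?t" using False \<open>0 < \<sigma>\<close> by simp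
    fix j
    have "\<bar>Dw [] \<phi> (p + 1 *\<^sub>R (x - p))\<bar>
            \<le> C * \<sigma> ^ j * fact j * M j * (real CARD('n) * norm (x - p)) ^ j * 1 ^ j / fact j"
      using flat_Dw_bound_along_segment[OF smooth flat bound, where t=1 and w="[]"] by simp
    then show "\<bar>\<phi> x\<bar> / C \<le> ?t ^ j * M j"
      using \<open>0 < C\<close> by (simp add: pos_divide_le_eq power_mult_distrib mult_ac)
  qed
  then show ?thesis using \<open>0 < C\<close> by (simp add: pos_divide_le_eq mult.commute)
qed

lemma infdist_lessE:
  assumes "A \<noteq> {}" "infdist x A < e"
  obtains a where "a \<in> A" "dist x a < e"
  using assms by (auto simp: infdist_notempty cINF_less_iff intro: bdd_belowI2[where m=0])

text \<open>The ball hypothesis keeps a nearly closest zero \<open>p\<close> of \<open>x\<close>, and by convexity the segment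
  \<open>[p, x]\<close>, inside \<open>K\<close>.\<close>
lemma hM_infdist_lower_bound_near_flat_zeros:
  fixes \<Omega> :: "(real^'n::finite) set" and \<phi> :: "real^'n \<Rightarrow> real"
  defines "X \<equiv> zero_set \<Omega> \<phi>"
  assumes M: "strongly_regular M" and \<phi>: "\<phi> \<in> CM M \<Omega>" and loj: "CM_lojasiewicz M \<Omega> \<phi>"
    and K: "compact K" "convex K" "K \<subseteq> \<Omega>"
    and flat: "\<And>p w. p \<in> K \<inter> X \<Longrightarrow> Dw w \<phi> p = 0"
  obtains c lam where "0 < c" "0 < lam"
    "\<And>x. x \<in> K - X \<Longrightarrow> ball x (2 * infdist x X) \<subseteq> K \<Longrightarrow> c \<le> hM M (lam * infdist x X)"
proof -
  have M0: "0 \<le> M j" for j using strongly_regular_ge_one[OF M, of j] by simp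
  obtain A where A: "0 < A" "\<And>j k. M (j + k) \<le> A ^ (j + k) * M j * M k"
    using M unfolding strongly_regular_def by blast
  have "\<exists>C>0. \<exists>\<sigma>>0. \<forall>w. \<forall>x\<in>K. \<bar>Dw w \<phi> x\<bar> \<le> C * \<sigma> ^ length w * fact (length w) * M (length w)"
    using \<phi> K by (simp add: CM_def)
  then obtain C \<sigma> where C: "0 < C" "0 < \<sigma>"
    and bound: "\<forall>w. \<forall>x\<in>K. \<bar>Dw w \<phi> x\<bar> \<le> C * \<sigma> ^ length w * fact (length w) * M (length w)"
    by blast
  define \<tau> where "\<tau> = 2 * real CARD('n) * \<sigma>"
  define lam where "lam = A * \<tau>"
  have "0 < lam" using A C by (simp add: lam_def \<tau>_def)
  then have "\<exists>C'>0. \<exists>\<sigma>'>0. \<forall>w. \<forall>x\<in>K - X. \<bar>Dw w (\<lambda>y. 1 / \<phi> y) x\<bar> \<le>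
      C' * \<sigma>' ^ length w * fact (length w) * M (length w) / hM M (lam * infdist x X)"
    using loj K unfolding X_def by (simp add: CM_lojasiewicz_def)
  then obtain C' \<sigma>' where "0 < C'" and loj_K: "\<forall>w. \<forall>x\<in>K - X. \<bar>Dw w (\<lambda>y. 1 / \<phi> y) x\<bar> \<le>
      C' * \<sigma>' ^ length w * fact (length w) * M (length w) / hM M (lam * infdist x X)"
    by blast
  have "1 / (C * C') \<le> hM M (lam * infdist x X)"
    if x: "x \<in> K - X" and ball: "ball x (2 * infdist x X) \<subseteq> K" for x
  proof -
    define d where "d = infdist x X"
    have "\<phi> x \<noteq> 0" using x K by (auto simp: X_def zero_set_def)
    have lower: "1 / \<bar>\<phi> x\<bar> \<le> C' / hM M (lam * d)"
      using bspec[OF spec[OF loj_K, of "[]"] x] M by (simp add: d_def strongly_regular_def)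
    then have "hM M (lam * d) \<noteq> 0" using \<open>\<phi> x \<noteq> 0\<close> by auto
    then have "0 < d" using infdist_nonneg[of x X] by (auto simp: d_def hM_def split: if_splits)
    moreover have "X \<noteq> {}" using \<open>0 < d\<close> by (auto simp: d_def infdist_def)
    ultimately obtain p where p: "p \<in> X" "dist x p < 2 * d"
      using infdist_lessE[of X x "2 * d"] by (auto simp: d_def)
    have "p \<in> K" using p ball by (auto simp: d_def dist_commute)
    then have seg: "closed_segment p x \<subseteq> K"
      using x \<open>convex K\<close> by (simp add: closed_segment_subset)
    have "\<bar>\<phi> x\<bar> \<le> C * hM M (real CARD('n) * \<sigma> * norm (x - p))"
    proof (rule flat_abs_le_hM[OF _ _ _ C])
      show "\<And>w z. z \<in> closed_segment p x \<Longrightarrow> Dw w \<phi> differentiable (at z)"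
        using \<phi> seg K unfolding CM_def smooth_on_def by blast
      show "\<And>w. Dw w \<phi> p = 0" using flat p \<open>p \<in> K\<close> by blast
    qed (use bound seg in blast)
    also have "\<dots> \<le> C * hM M (lam * d / A)"
      using hM_mono[OF M0] p C A
      by (intro mult_left_mono) (auto simp: lam_def \<tau>_def dist_norm norm_minus_commute)
    finally have "1 \<le> C * C' * hM M (lam * d)"
      using one_le_mult_hM_of_squeeze[OF M0 _ A(1) A(2) _ _ lower] \<open>0 < lam\<close> \<open>0 < d\<close> \<open>\<phi> x \<noteq> 0\<close>
      by simp
    then show ?thesis using C \<open>0 < C'\<close> by (simp add: d_def field_simps)
  qed
  moreover have "0 < 1 / (C * C')" using C \<open>0 < C'\<close> by simp
  ultimately show thesis using that \<open>0 < lam\<close> by blast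
qed

lemma not_in_frontier_zero_set_if_zeros_flat_near:
  fixes \<Omega> :: "(real^'n::finite) set" and \<phi> :: "real^'n \<Rightarrow> real"
  defines "X \<equiv> zero_set \<Omega> \<phi>"
  assumes M: "strongly_regular M" and \<phi>: "\<phi> \<in> CM M \<Omega>" and loj: "CM_lojasiewicz M \<Omega> \<phi>"
    and "0 < r" and cball: "cball a r \<subseteq> \<Omega>"
    and flat: "\<And>p w. p \<in> cball a r \<inter> X \<Longrightarrow> Dw w \<phi> p = 0"
  shows "a \<notin> frontier X"
proof
  assume "a \<in> frontier X"
  then have "a \<in> closure X" "a \<notin> interior X" by (auto simp: frontier_def)
  obtain c lam where "0 < c" "0 < lam" and lower:
    "\<And>x. x \<in> cball a r - X \<Longrightarrow> ball x (2 * infdist x X) \<subseteq> cball a r \<Longrightarrow> c \<le> hM M (lam * infdist x X)"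
    using hM_infdist_lower_bound_near_flat_zeros[OF M \<phi> loj compact_cball convex_cball cball] flat
    unfolding X_def by blast
  have "1 \<le> M 1" by (rule strongly_regular_ge_one[OF M])
  define \<epsilon> where "\<epsilon> = min (r / 3) (c / (lam * M 1))"
  have "0 < \<epsilon>" using \<open>0 < r\<close> \<open>0 < c\<close> \<open>0 < lam\<close> \<open>1 \<le> M 1\<close> by (simp add: \<epsilon>_def)
  then obtain x where x: "x \<in> ball a \<epsilon>" "x \<notin> X"
    using \<open>a \<notin> interior X\<close> unfolding mem_interior by (meson subsetI)
  define d where "d = infdist x X"
  have "X \<noteq> {}" using \<open>a \<in> closure X\<close> by auto
  then have "d \<le> dist x a"
    using infdist_triangle[of x X a] \<open>a \<in> closure X\<close> in_closure_iff_infdist_zero[of X a]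
    by (simp add: d_def)
  then have "d < \<epsilon>" using x by (simp add: dist_commute)
  have "x \<in> cball a r - X" using x \<open>0 < r\<close> by (auto simp: \<epsilon>_def)
  moreover have "ball x (2 * d) \<subseteq> cball a r"
  proof
    fix y assume "y \<in> ball x (2 * d)"
    then have "dist a y < 3 * \<epsilon>"
      using x \<open>d < \<epsilon>\<close> dist_triangle[of a y x] by simp
    then show "y \<in> cball a r" by (simp add: \<epsilon>_def)
  qed
  ultimately have "c \<le> hM M (lam * d)" using lower by (simp add: d_def)
  also have "\<dots> \<le> lam * d * M 1"
    using hM_le[of M "lam * d" 1, OF order.trans[OF zero_le_one strongly_regular_ge_one[OF M]]]
      \<open>0 < lam\<close> infdist_nonneg[of x X] by (simp add: d_def)
  also have "\<dots> < lam * \<epsilon> * M 1"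
    using \<open>d < \<epsilon>\<close> \<open>0 < lam\<close> \<open>1 \<le> M 1\<close> by simp
  also have "\<dots> \<le> c"
  proof -
    have "\<epsilon> \<le> c / (lam * M 1)" by (simp add: \<epsilon>_def)
    then show ?thesis using \<open>0 < lam\<close> \<open>1 \<le> M 1\<close> by (simp add: pos_le_divide_eq mult_ac)
  qed
  finally show False by simp
qed

theorem lemma3p3:
  fixes M :: "nat \<Rightarrow> real" and \<Omega> :: "(real^'n::finite) set" and \<phi> :: "real^'n \<Rightarrow> real"
  assumes "strongly_regular M"
    and "open \<Omega>"
    and "\<phi> \<in> CM M \<Omega>"
    and "\<exists>x\<in>\<Omega>. \<phi> x \<noteq> 0"
    and "CM_lojasiewicz M \<Omega> \<phi>"
  shows "\<Omega> \<inter> frontier (zero_set \<Omega> \<phi>) \<subseteq> closure (zero_set \<Omega> \<phi> - flat_points \<Omega> \<phi>)"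
proof
  fix a assume a: "a \<in> \<Omega> \<inter> frontier (zero_set \<Omega> \<phi>)"
  show "a \<in> closure (zero_set \<Omega> \<phi> - flat_points \<Omega> \<phi>)"
  proof (rule ccontr)
    assume "a \<notin> closure (zero_set \<Omega> \<phi> - flat_points \<Omega> \<phi>)"
    then obtain e where "0 < e"
      and nonflat_far: "\<And>y. y \<in> zero_set \<Omega> \<phi> - flat_points \<Omega> \<phi> \<Longrightarrow> e \<le> dist y a"
      unfolding closure_approachable by (auto simp: not_less)
    obtain e' where "0 < e'" "cball a e' \<subseteq> \<Omega>"
      using a \<open>open \<Omega>\<close> open_contains_cball by blast
    define r where "r = min (e / 2) e'"
    have "0 < r" "cball a r \<subseteq> \<Omega>"
      using \<open>0 < e\<close> \<open>0 < e'\<close> \<open>cball a e' \<subseteq> \<Omega>\<close> by (auto simp: r_def)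
    have "Dw w \<phi> p = 0" if "p \<in> cball a r \<inter> zero_set \<Omega> \<phi>" for p w
      using nonflat_far[of p] that \<open>0 < e\<close> by (force simp: r_def flat_points_def dist_commute)
    then have "a \<notin> frontier (zero_set \<Omega> \<phi>)"
      using not_in_frontier_zero_set_if_zeros_flat_near[OF assms(1,3,5) \<open>0 < r\<close> \<open>cball a r \<subseteq> \<Omega>\<close>]
      by blast
    with a show False by blast
  qed
qed

end
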